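(* For every integer $n\geq 3$, there exists a set of $n$ points in $\mathbb{R}^{n-2}$ that is in crescent configuration.
   Context: A set of points in $\mathbb{R}^d$ is in general position if no $d+1$ of the points lie on a common (affine) hyperplane of $\mathbb{R}^d$ and no $d+2$ of the points lie on a common hypersphere of $\mathbb{R}^d$. A set of $n$ points in $\mathbb{R}^d$ is in crescent configuration if the points are in general position in $\mathbb{R}^d$, the Euclidean distances between the $\binom{n}{2}$ pairs of distinct points take exactly $n-1$ distinct values, and for every $1\le i\le n-1$ there is one of these distance values that is attained by exactly $i$ pairs of points. *)

theory Defs
  imports "HOL-Analysis.Analysis"
begin

text \<open>Points of R^d are elements of a Euclidean space 'a with d = DIM('a).
  An affine hyperplane is {x. a \<bullet> x = b} with a \<noteq> 0; a hypersphere is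
  sphere c r with r > 0.\<close>

definition general_position :: "'a::euclidean_space set \<Rightarrow> bool" where
  "general_position P \<longleftrightarrow>
     (\<forall>S\<subseteq>P. card S = DIM('a) + 1 \<longrightarrow>
        \<not> (\<exists>a b. a \<noteq> 0 \<and> S \<subseteq> {x. a \<bullet> x = b})) \<and>
     (\<forall>S\<subseteq>P. card S = DIM('a) + 2 \<longrightarrow>
        \<not> (\<exists>c r. r > 0 \<and> S \<subseteq> sphere c r))"

definition distances :: "'a::metric_space set \<Rightarrow> real set" where
  "distances P = {dist x y | x y. x \<in> P \<and> y \<in> P \<and> x \<noteq> y}"

definition pairs_at_distance :: "'a::metric_space set \<Rightarrow> real \<Rightarrow> 'a set set" where
  "pairs_at_distance P \<delta> = {{x, y} | x y. x \<in> P \<and> y \<in> P \<and> x \<noteq> y \<and> dist x y = \<delta>}"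

definition crescent_configuration :: "nat \<Rightarrow> 'a::euclidean_space set \<Rightarrow> bool" where
  "crescent_configuration n P \<longleftrightarrow>
     finite P \<and> card P = n \<and> general_position P \<and>
     card (distances P) = n - 1 \<and>
     (\<forall>i\<in>{1..n-1}. \<exists>\<delta>\<in>distances P. card (pairs_at_distance P \<delta>) = i)"

end

theory Submission
  imports Defs
begin

text \<open>Let \<open>d = n - 2\<close> and, for positive weights \<open>c\<^sub>1, \<dots>, c\<^sub>d\<close> with partial sums
  \<open>s\<^sub>j = c\<^sub>1\<^sup>2 + \<dots> + c\<^sub>j\<^sup>2\<close>, put
  \<open>Q\<^sub>j = (0, \<dots>, 0, \<surd>s\<^sub>j, -c\<^sub>j\<^sub>+\<^sub>1, \<dots>, -c\<^sub>d)\<close> for \<open>0 \<le> j \<le> d\<close>. All \<open>Q\<^sub>j\<close> lie on the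
  sphere of radius \<open>\<surd>s\<^sub>d\<close> about the origin, and for \<open>j < k\<close> the squared distance
  \<open>|Q\<^sub>j - Q\<^sub>k|\<^sup>2 = 2 s\<^sub>k + 2 c\<^sub>k \<surd>s\<^sub>k\<close> depends on \<open>k\<close> only. Together with the origin this
  gives \<open>d + 2\<close> points in which the \<open>k\<close>-th distance occurs exactly \<open>k\<close> times and the radius
  \<open>d + 1\<close> times. For increasing weights the distances increase with \<open>k\<close>, and
  \<open>c\<^sub>d\<^sup>2 > 3 s\<^sub>d\<^sub>-\<^sub>1\<close> (e.g. \<open>c\<^sub>m = 2\<^sup>m\<close>) puts the radius strictly between the last two of
  them, so all \<open>d + 1\<close> values are distinct. General position comes from the triangular shape
  of the coordinates: solving a linear system in them coordinate by coordinate shows that no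
  hyperplane contains \<open>d + 1\<close> of the points, and a sphere through all of them would have a
  centre \<open>z\<close> with \<open>z \<bullet> Q\<^sub>j\<close> constant, hence \<open>z = 0\<close> and radius \<open>0\<close>.\<close>

lemma sum_split_greaterThan:
  fixes f :: "nat \<Rightarrow> 'a::comm_monoid_add"
  assumes "m \<le> Suc j" "j \<le> d"
  shows "sum f {m..d} = sum f {m..j} + sum f {j<..d}"
proof -
  have "{m..d} = {m..j} \<union> {j<..d}" using assms by auto
  then show ?thesis by (simp add: sum.union_disjoint ivl_disj_int)
qed

lemma sum_split_at:
  fixes f :: "nat \<Rightarrow> 'a::comm_monoid_add"
  assumes "1 \<le> j" "j \<le> d"
  shows "sum f {1..d} = sum f {1..<j} + f j + sum f {j<..d}"
proof -
  have "sum f {1..d} = sum f {1..j} + sum f {j<..d}"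
    using assms by (intro sum_split_greaterThan) auto
  then show ?thesis
    using assms by (simp add: sum.last_plus add.commute)
qed

definition sqsum :: "(nat \<Rightarrow> real) \<Rightarrow> nat \<Rightarrow> real" where
  "sqsum c k = (\<Sum>i=1..k. (c i)\<^sup>2)"

lemma sqsum_0 [simp]: "sqsum c 0 = 0"
  by (simp add: sqsum_def)

lemma sqsum_Suc: "sqsum c (Suc k) = sqsum c k + (c (Suc k))\<^sup>2"
  by (simp add: sqsum_def)

lemma sqsum_nonneg: "sqsum c k \<ge> 0"
  by (simp add: sqsum_def sum_nonneg)

lemma sq_le_sqsum: "1 \<le> k \<Longrightarrow> (c k)\<^sup>2 \<le> sqsum c k"
  using sqsum_Suc[of c "k - 1"] sqsum_nonneg[of c "k - 1"] by simp

lemma strict_mono_sqsum: "(\<And>m. c m > 0) \<Longrightarrow> strict_mono (sqsum c)"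
  by (simp add: strict_mono_Suc_iff sqsum_Suc) (metis order_less_irrefl)

lemma sqsum_pos:
  assumes "\<And>m. c m > 0" "1 \<le> k"
  shows "sqsum c k > 0"
  using strict_monoD[OF strict_mono_sqsum[OF assms(1)], of 0 k] assms(2) by simp

definition crescent_coord :: "(nat \<Rightarrow> real) \<Rightarrow> nat \<Rightarrow> nat \<Rightarrow> real" where
  "crescent_coord c j m = (if m < j then 0 else if m = j then sqrt (sqsum c j) else - c m)"

definition crescent_sqdist :: "(nat \<Rightarrow> real) \<Rightarrow> nat \<Rightarrow> real" where
  "crescent_sqdist c k = 2 * sqsum c k + 2 * c k * sqrt (sqsum c k)"

lemma sum_crescent_coord_sq:
  assumes "j \<le> d"
  shows "(\<Sum>m=1..d. (crescent_coord c j m)\<^sup>2) = sqsum c d"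
proof (cases "j = 0")
  case True
  then show ?thesis by (simp add: crescent_coord_def sqsum_def)
next
  case False
  have "(\<Sum>m=1..d. (crescent_coord c j m)\<^sup>2)
      = (\<Sum>m=1..<j. (crescent_coord c j m)\<^sup>2) + (crescent_coord c j j)\<^sup>2
        + (\<Sum>m\<in>{j<..d}. (crescent_coord c j m)\<^sup>2)"
    using False assms by (intro sum_split_at) auto
  also have "\<dots> = sqsum c j + (\<Sum>m\<in>{j<..d}. (c m)\<^sup>2)"
    by (simp add: crescent_coord_def sqsum_nonneg)
  also have "\<dots> = sqsum c d"
    unfolding sqsum_def using assms sum_split_greaterThan[of 1 j d "\<lambda>i. (c i)\<^sup>2"] by simp
  finally show ?thesis .
qed

lemma sum_crescent_coord_diff_sq:
  assumes "j < k" "k \<le> d"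
  shows "(\<Sum>m=1..d. (crescent_coord c j m - crescent_coord c k m)\<^sup>2) = crescent_sqdist c k"
proof -
  have "(\<Sum>m=1..d. (crescent_coord c j m - crescent_coord c k m)\<^sup>2)
      = (\<Sum>m=1..<k. (crescent_coord c j m)\<^sup>2) + (c k + sqrt (sqsum c k))\<^sup>2"
  proof -
    have "(\<Sum>m\<in>{k<..d}. (crescent_coord c j m - crescent_coord c k m)\<^sup>2) = 0"
      using assms by (intro sum.neutral) (auto simp: crescent_coord_def)
    moreover have "(\<Sum>m=1..<k. (crescent_coord c j m - crescent_coord c k m)\<^sup>2)
        = (\<Sum>m=1..<k. (crescent_coord c j m)\<^sup>2)"
      by (intro sum.cong) (auto simp: crescent_coord_def)
    moreover have "crescent_coord c j k - crescent_coord c k k = - (c k + sqrt (sqsum c k))"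
      using assms by (simp add: crescent_coord_def)
    moreover have "(- c k - sqrt (sqsum c k))\<^sup>2 = (c k + sqrt (sqsum c k))\<^sup>2"
      by (simp add: power2_eq_square algebra_simps)
    ultimately show ?thesis
      using assms sum_split_at[of k d "\<lambda>m. (crescent_coord c j m - crescent_coord c k m)\<^sup>2"]
      by simp
  qed
  also have "(\<Sum>m=1..<k. (crescent_coord c j m)\<^sup>2) = sqsum c (k - 1)"
  proof -
    have "{1..<k} = {1..k - 1}" using assms by auto
    then show ?thesis using assms sum_crescent_coord_sq[of j "k - 1" c] by simp
  qed
  also have "sqsum c (k - 1) = sqsum c k - (c k)\<^sup>2"
    using assms sqsum_Suc[of c "k - 1"] by simp
  finally show ?thesis
    using sqsum_nonneg[of c k] by (simp add: crescent_sqdist_def power2_eq_square algebra_simps)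
qed

lemma sum_mult_crescent_coord:
  assumes "j \<le> d"
  shows "(\<Sum>m=1..d. A m * crescent_coord c j m)
    = (if j = 0 then 0 else A j * sqrt (sqsum c j)) - (\<Sum>m\<in>{j<..d}. c m * A m)"
proof -
  have "(\<Sum>m=1..j. A m * crescent_coord c j m) = (if j = 0 then 0 else A j * sqrt (sqsum c j))"
    by (simp add: sum.last_plus crescent_coord_def)
  moreover have "(\<Sum>m\<in>{j<..d}. A m * crescent_coord c j m) = - (\<Sum>m\<in>{j<..d}. c m * A m)"
    by (simp add: crescent_coord_def sum_negf[symmetric] mult.commute)
  ultimately show ?thesis
    using assms sum_split_greaterThan[of 1 j d "\<lambda>m. A m * crescent_coord c j m"] by simp
qed

lemma crescent_coord_coeffs_zero_below:
  assumes pos: "\<And>m. c m > 0" and "K \<le> d"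
    and step: "\<And>j. 1 \<le> j \<Longrightarrow> j \<le> K \<Longrightarrow>
      (\<Sum>m=1..d. A m * crescent_coord c (j - 1) m) = (\<Sum>m=1..d. A m * crescent_coord c j m)"
    and "1 \<le> m" "m \<le> K"
  shows "A m = 0"
  using assms(4,5)
proof (induction m rule: less_induct)
  case (less j)
  have "(\<Sum>m=1..d. A m * crescent_coord c (j - 1) m) = - (c j * A j) - (\<Sum>m\<in>{j<..d}. c m * A m)"
  proof -
    have "{j - 1<..d} = insert j {j<..d}" using less.prems \<open>K \<le> d\<close> by auto
    moreover have "j - 1 \<noteq> 0 \<Longrightarrow> A (j - 1) = 0" using less by simp
    ultimately show ?thesis
      using less.prems \<open>K \<le> d\<close> sum_mult_crescent_coord[of "j - 1" d A c] by simp
  qed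
  moreover have "(\<Sum>m=1..d. A m * crescent_coord c j m)
      = A j * sqrt (sqsum c j) - (\<Sum>m\<in>{j<..d}. c m * A m)"
    using less.prems \<open>K \<le> d\<close> sum_mult_crescent_coord[of j d A c] by simp
  ultimately have "A j * (sqrt (sqsum c j) + c j) = 0"
    using step less.prems by (simp add: algebra_simps)
  moreover have "sqrt (sqsum c j) + c j > 0"
    using pos[of j] sqsum_nonneg[of c j] by (simp add: add_nonneg_pos)
  ultimately show ?case by simp
qed

lemma crescent_coord_coeffs_zero_above:
  assumes pos: "\<And>m. c m > 0"
    and vanish: "\<And>j. K < j \<Longrightarrow> j \<le> d \<Longrightarrow> (\<Sum>m=1..d. A m * crescent_coord c j m) = 0"
    and "K < m" "m \<le> d"
  shows "A m = 0"
  using assms(3,4)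
proof (induction "d - m" arbitrary: m rule: less_induct)
  case less
  have "(\<Sum>i\<in>{m<..d}. c i * A i) = 0"
    using less by (intro sum.neutral) auto
  then have "A m * sqrt (sqsum c m) = 0"
    using vanish[of m] less.prems sum_mult_crescent_coord[of m d A c] by simp
  moreover have "sqrt (sqsum c m) > 0"
    using sqsum_pos[OF pos, of m] less.prems by simp
  ultimately show ?case by simp
qed

lemma crescent_coord_coeffs_zero_of_const:
  assumes "\<And>m. c m > 0"
    and "\<And>j. j \<le> d \<Longrightarrow> (\<Sum>m=1..d. A m * crescent_coord c j m) = b"
    and "1 \<le> m" "m \<le> d"
  shows "A m = 0"
  using crescent_coord_coeffs_zero_below[of c d d A m] assms by simp

lemma crescent_coord_coeffs_zero_of_vanishing:
  assumes pos: "\<And>m. c m > 0" and "k \<le> d"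
    and vanish: "\<And>j. j \<le> d \<Longrightarrow> j \<noteq> k \<Longrightarrow> (\<Sum>m=1..d. A m * crescent_coord c j m) = 0"
    and "1 \<le> m" "m \<le> d"
  shows "A m = 0"
proof -
  have below: "A i = 0" if "1 \<le> i" "i < k" for i
    using crescent_coord_coeffs_zero_below[of c "k - 1" d A i] pos vanish that \<open>k \<le> d\<close> by simp
  have above: "A i = 0" if "k < i" "i \<le> d" for i
    using crescent_coord_coeffs_zero_above[of c k d A i] pos vanish that by simp
  have off_k: "A i = 0" if "1 \<le> i" "i \<le> d" "i \<noteq> k" for i
    using below above that by (meson linorder_neqE_nat)
  have "A k = 0" if "1 \<le> k"
  proof -
    have "(\<Sum>i\<in>{0<..d}. c i * A i) = (\<Sum>i\<in>{0<..d}. if i = k then c k * A k else 0)"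
      using off_k by (intro sum.cong) auto
    also have "\<dots> = c k * A k"
      using that \<open>k \<le> d\<close> by simp
    finally have "c k * A k = 0"
      using vanish[of 0] that sum_mult_crescent_coord[of 0 d A c] by simp
    then show ?thesis using pos[of k] by simp
  qed
  then show ?thesis
    using off_k assms(4,5) by (cases "m = k") auto
qed

lemma strict_mono_crescent_sqdist:
  assumes pos: "\<And>m. c m > 0" and "mono c"
  shows "strict_mono (crescent_sqdist c)"
proof (rule strict_monoI)
  fix j k :: nat
  assume "j < k"
  then have "sqsum c j < sqsum c k"
    using strict_mono_sqsum[OF pos] by (simp add: strict_mono_less)
  moreover have "c j * sqrt (sqsum c j) \<le> c k * sqrt (sqsum c k)"
    using \<open>j < k\<close> \<open>mono c\<close> \<open>sqsum c j < sqsum c k\<close> pos[of k] sqsum_nonneg[of c j]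
    by (intro mult_mono) (auto simp: monoD less_imp_le)
  ultimately show "crescent_sqdist c j < crescent_sqdist c k"
    by (simp add: crescent_sqdist_def)
qed

lemma crescent_sqdist_le:
  assumes "c k \<ge> 0" "1 \<le> k"
  shows "crescent_sqdist c k \<le> 4 * sqsum c k"
proof -
  have "c k \<le> sqrt (sqsum c k)"
    using sq_le_sqsum[OF assms(2)] by (simp add: real_le_rsqrt)
  then have "c k * sqrt (sqsum c k) \<le> sqrt (sqsum c k) * sqrt (sqsum c k)"
    by (rule mult_right_mono) (simp add: sqsum_nonneg)
  then show ?thesis
    using sqsum_nonneg[of c k] by (simp add: crescent_sqdist_def)
qed

lemma sqsum_lt_crescent_sqdist:
  assumes "\<And>m. c m > 0" "1 \<le> k"
  shows "sqsum c k < crescent_sqdist c k"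
proof -
  have "0 \<le> c k * sqrt (sqsum c k)"
    using assms(1)[of k] sqsum_nonneg[of c k] by simp
  then show ?thesis
    using sqsum_pos[of c k] assms by (simp add: crescent_sqdist_def)
qed

lemma crescent_sqdist_lt_sqsum:
  assumes pos: "\<And>m. c m > 0" and big: "3 * sqsum c (d - 1) < (c d)\<^sup>2"
    and "1 \<le> k" "k < d"
  shows "crescent_sqdist c k < sqsum c d"
proof -
  have "crescent_sqdist c k \<le> 4 * sqsum c k"
    using pos[of k] assms(3) by (simp add: crescent_sqdist_le)
  also have "\<dots> \<le> 4 * sqsum c (d - 1)"
    using strict_mono_sqsum[OF pos] assms(4) by (simp add: strict_mono_less_eq)
  also have "\<dots> < sqsum c (d - 1) + (c d)\<^sup>2"
    using big by simp
  also have "\<dots> = sqsum c d"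
    using sqsum_Suc[of c "d - 1"] assms(4) by simp
  finally show ?thesis .
qed

lemma sqsum_powers_of_two: "3 * sqsum (\<lambda>m. 2 ^ m) k + 4 = 4 ^ Suc k"
  by (induction k) (simp_all add: sqsum_Suc power2_eq_square flip: power_mult_distrib)

lemma distances_eq_nonempty_pairs: "distances P = {t. pairs_at_distance P t \<noteq> {}}"
  unfolding distances_def pairs_at_distance_def by blast

locale cone_configuration =
  fixes Q :: "nat \<Rightarrow> 'a::euclidean_space" and d :: nat and \<rho> :: real and \<delta> :: "nat \<Rightarrow> real"
  assumes norm_Q: "\<And>j. j \<le> d \<Longrightarrow> norm (Q j) = \<rho>"
    and dist_Q: "\<And>j k. j < k \<Longrightarrow> k \<le> d \<Longrightarrow> dist (Q j) (Q k) = \<delta> k"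
    and rho_pos: "\<rho> > 0"
    and delta_pos: "\<And>k. 1 \<le> k \<Longrightarrow> k \<le> d \<Longrightarrow> \<delta> k > 0"
begin

abbreviation points :: "'a set" where
  "points \<equiv> insert 0 (Q ` {..d})"

lemma Q_neq_zero: "j \<le> d \<Longrightarrow> Q j \<noteq> 0"
  using norm_Q rho_pos by force

lemma Q_neq:
  assumes "j < k" "k \<le> d"
  shows "Q j \<noteq> Q k"
  using dist_Q[OF assms] delta_pos[of k] assms by auto

lemma inj_on_Q: "inj_on Q {..d}"
  by (intro inj_onI) (metis Q_neq atMost_iff linorder_neqE_nat)

lemma card_points: "card points = d + 2"
  using card_image[OF inj_on_Q] Q_neq_zero by (subst card_insert_disjoint) auto

lemma pairs_at_distance_points:
  "pairs_at_distance points t =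
     {{0, Q j} | j. j \<le> d \<and> t = \<rho>} \<union> {{Q j, Q k} | j k. j < k \<and> k \<le> d \<and> t = \<delta> k}"
    (is "_ = ?Z \<union> ?QQ")
proof
  show "pairs_at_distance points t \<subseteq> ?Z \<union> ?QQ"
  proof
    fix e assume "e \<in> pairs_at_distance points t"
    then obtain x y where xy: "x \<in> points" "y \<in> points" "x \<noteq> y" "dist x y = t" "e = {x, y}"
      unfolding pairs_at_distance_def by auto
    show "e \<in> ?Z \<union> ?QQ"
    proof (cases "x = 0 \<or> y = 0")
      case True
      then show ?thesis
        using xy norm_Q by (auto simp: insert_commute)
    next
      case False
      then obtain j k where jk: "j \<le> d" "k \<le> d" "x = Q j" "y = Q k" "j \<noteq> k"
        using xy by auto
      then have "e = {Q (min j k), Q (max j k)}" "t = \<delta> (max j k)"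
        using xy dist_Q[of j k] dist_Q[of k j]
        by (auto simp: min_def max_def dist_commute insert_commute)
      moreover have "min j k < max j k" "max j k \<le> d"
        using jk by auto
      ultimately show ?thesis
        by blast
    qed
  qed
next
  show "?Z \<union> ?QQ \<subseteq> pairs_at_distance points t"
  proof
    fix e assume "e \<in> ?Z \<union> ?QQ"
    then consider j where "j \<le> d" "t = \<rho>" "e = {0, Q j}"
      | j k where "j < k" "k \<le> d" "t = \<delta> k" "e = {Q j, Q k}"
      by blast
    then show "e \<in> pairs_at_distance points t"
    proof cases
      case 1
      then have "Q j \<in> points" "0 \<noteq> Q j" "dist 0 (Q j) = t"
        using Q_neq_zero[of j] norm_Q[of j] by auto
      then show ?thesis
        unfolding pairs_at_distance_def using 1 by blast
    next
      case 2
      then have "Q j \<in> points" "Q k \<in> points" "Q j \<noteq> Q k" "dist (Q j) (Q k) = t"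
        using Q_neq[of j k] dist_Q[of j k] by auto
      then show ?thesis
        unfolding pairs_at_distance_def using 2 by blast
    qed
  qed
qed

lemma card_pairs_at_rho:
  assumes "\<rho> \<notin> \<delta> ` {1..d}"
  shows "card (pairs_at_distance points \<rho>) = d + 1"
proof -
  have "pairs_at_distance points \<rho> = (\<lambda>j. {0, Q j}) ` {..d}"
    using assms unfolding pairs_at_distance_points by force
  moreover have "inj_on (\<lambda>j. {0, Q j}) {..d}"
    using inj_on_Q Q_neq_zero by (auto simp: inj_on_def doubleton_eq_iff)
  ultimately show ?thesis
    by (simp add: card_image)
qed

lemma card_pairs_at_delta:
  assumes "inj_on \<delta> {1..d}" "\<rho> \<notin> \<delta> ` {1..d}" "1 \<le> k" "k \<le> d"
  shows "card (pairs_at_distance points (\<delta> k)) = k"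
proof -
  have same_delta: "\<delta> k = \<delta> k' \<longleftrightarrow> k' = k" if "j < k'" "k' \<le> d" for j k'
    using inj_onD[OF assms(1)] assms(3,4) that by fastforce
  have "\<delta> k \<noteq> \<rho>"
    using assms(2-4) by auto
  then have "pairs_at_distance points (\<delta> k) = (\<lambda>j. {Q j, Q k}) ` {..<k}"
    unfolding pairs_at_distance_points using same_delta assms(4) by auto
  moreover have "inj_on (\<lambda>j. {Q j, Q k}) {..<k}"
  proof (rule inj_onI)
    fix i j assume "i \<in> {..<k}" "j \<in> {..<k}" "{Q i, Q k} = {Q j, Q k}"
    then have "Q i = Q j"
      using Q_neq[of i k] Q_neq[of j k] assms(4) by (auto simp: doubleton_eq_iff)
    then show "i = j"
      using inj_onD[OF inj_on_Q] \<open>i \<in> {..<k}\<close> \<open>j \<in> {..<k}\<close> assms(4) by simp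
  qed
  ultimately show ?thesis
    by (simp add: card_image)
qed

lemma distances_points: "distances points = insert \<rho> (\<delta> ` {1..d})"
proof -
  have "pairs_at_distance points t \<noteq> {} \<longleftrightarrow> t \<in> insert \<rho> (\<delta> ` {1..d})" for t
  proof
    assume "pairs_at_distance points t \<noteq> {}"
    then show "t \<in> insert \<rho> (\<delta> ` {1..d})"
      unfolding pairs_at_distance_points by auto
  next
    assume "t \<in> insert \<rho> (\<delta> ` {1..d})"
    then consider "t = \<rho>" | k where "0 < k" "k \<le> d" "t = \<delta> k"
      by (auto simp: Suc_le_eq)
    then show "pairs_at_distance points t \<noteq> {}"
    proof cases
      case 1
      then have "{0, Q 0} \<in> pairs_at_distance points t"
        unfolding pairs_at_distance_points by blast
      then show ?thesis by blast
    next
      case 2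
      then have "{Q 0, Q k} \<in> pairs_at_distance points t"
        unfolding pairs_at_distance_points by blast
      then show ?thesis by blast
    qed
  qed
  then show ?thesis
    unfolding distances_eq_nonempty_pairs by blast
qed

lemma crescent_configuration_points:
  assumes "inj_on \<delta> {1..d}" "\<rho> \<notin> \<delta> ` {1..d}" "general_position points"
  shows "crescent_configuration (d + 2) points"
  unfolding crescent_configuration_def
proof (intro conjI ballI)
  show "card (distances points) = d + 2 - 1"
    using assms(1,2) by (simp add: distances_points card_image)
  fix i assume "i \<in> {1..d + 2 - 1}"
  then show "\<exists>t\<in>distances points. card (pairs_at_distance points t) = i"
    using card_pairs_at_delta[OF assms(1,2), of i] card_pairs_at_rho[OF assms(2)]
    by (cases "i \<le> d") (auto simp: distances_points)
qed (use card_points assms(3) in auto)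

end

lemma general_positionI:
  fixes P :: "'a::euclidean_space set"
  assumes "finite P" "card P = DIM('a) + 2"
    and hyperplane: "\<And>p a b. p \<in> P \<Longrightarrow> P - {p} \<subseteq> {x. a \<bullet> x = b} \<Longrightarrow> a = 0"
    and sphere: "\<And>z r. P \<subseteq> sphere z r \<Longrightarrow> r \<le> 0"
  shows "general_position P"
  unfolding general_position_def
proof (intro conjI allI impI notI)
  fix S assume "S \<subseteq> P" "card S = DIM('a) + 1" "\<exists>a b. a \<noteq> 0 \<and> S \<subseteq> {x. a \<bullet> x = b}"
  then obtain a b where "a \<noteq> 0" "S \<subseteq> {x. a \<bullet> x = b}" by blast
  have "S \<noteq> P"
    using \<open>card S = DIM('a) + 1\<close> assms(2) by auto
  then obtain p where "p \<in> P" "p \<notin> S"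
    using \<open>S \<subseteq> P\<close> by blast
  have "S = P - {p}"
    using \<open>S \<subseteq> P\<close> \<open>p \<in> P\<close> \<open>p \<notin> S\<close> \<open>card S = DIM('a) + 1\<close> assms(1,2)
    by (intro card_subset_eq) auto
  then show False
    using hyperplane[OF \<open>p \<in> P\<close>] \<open>a \<noteq> 0\<close> \<open>S \<subseteq> {x. a \<bullet> x = b}\<close> by blast
next
  fix S assume "S \<subseteq> P" "card S = DIM('a) + 2" "\<exists>z r. r > 0 \<and> S \<subseteq> sphere z r"
  moreover have "S = P"
    using calculation assms(1,2) by (intro card_subset_eq) auto
  ultimately show False
    using sphere by force
qed

definition crescent_point :: "('d::finite \<Rightarrow> nat) \<Rightarrow> (nat \<Rightarrow> real) \<Rightarrow> nat \<Rightarrow> real ^ 'd" where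
  "crescent_point idx c j = (\<chi> i. crescent_coord c j (idx i))"

lemma inner_vec_reindex:
  fixes idx :: "'d::finite \<Rightarrow> nat"
  assumes "bij_betw idx UNIV {1..CARD('d)}"
  shows "(\<chi> i. u (idx i)) \<bullet> ((\<chi> i. v (idx i)) :: real ^ 'd) = (\<Sum>m=1..CARD('d). u m * v m)"
  using sum.reindex_bij_betw[OF assms, of "\<lambda>m. u m * v m"] by (simp add: inner_vec_def)

lemma inner_crescent_point:
  fixes idx :: "'d::finite \<Rightarrow> nat"
  assumes "bij_betw idx UNIV {1..CARD('d)}"
  shows "a \<bullet> crescent_point idx c j
    = (\<Sum>m=1..CARD('d). a $ inv_into UNIV idx m * crescent_coord c j m)"
proof -
  have "a = (\<chi> i. a $ inv_into UNIV idx (idx i))"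
    using bij_betw_imp_inj_on[OF assms] by (simp add: vec_eq_iff)
  then have "a \<bullet> crescent_point idx c j
      = (\<chi> i. a $ inv_into UNIV idx (idx i)) \<bullet> (\<chi> i. crescent_coord c j (idx i))"
    unfolding crescent_point_def by simp
  also have "\<dots> = (\<Sum>m=1..CARD('d). a $ inv_into UNIV idx m * crescent_coord c j m)"
    by (rule inner_vec_reindex[OF assms])
  finally show ?thesis .
qed

lemma norm_crescent_point:
  fixes idx :: "'d::finite \<Rightarrow> nat"
  assumes "bij_betw idx UNIV {1..CARD('d)}" "j \<le> CARD('d)"
  shows "norm (crescent_point idx c j) = sqrt (sqsum c CARD('d))"
proof -
  have "crescent_point idx c j \<bullet> crescent_point idx c j
      = (\<Sum>m=1..CARD('d). crescent_coord c j m * crescent_coord c j m)"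
    unfolding crescent_point_def by (rule inner_vec_reindex[OF assms(1)])
  also have "\<dots> = sqsum c CARD('d)"
    using sum_crescent_coord_sq[OF assms(2)] by (simp add: power2_eq_square)
  finally show ?thesis
    by (simp add: norm_eq_sqrt_inner)
qed

lemma dist_crescent_point:
  fixes idx :: "'d::finite \<Rightarrow> nat"
  assumes "bij_betw idx UNIV {1..CARD('d)}" "j < k" "k \<le> CARD('d)"
  shows "dist (crescent_point idx c j) (crescent_point idx c k) = sqrt (crescent_sqdist c k)"
proof -
  let ?D = "\<lambda>m. crescent_coord c j m - crescent_coord c k m"
  have "crescent_point idx c j - crescent_point idx c k = (\<chi> i. ?D (idx i))"
    by (simp add: crescent_point_def vec_eq_iff)
  then have "(crescent_point idx c j - crescent_point idx c k) \<bullet>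
      (crescent_point idx c j - crescent_point idx c k) = (\<Sum>m=1..CARD('d). ?D m * ?D m)"
    using inner_vec_reindex[OF assms(1), of ?D ?D] by simp
  also have "\<dots> = crescent_sqdist c k"
    using sum_crescent_coord_diff_sq[OF assms(2,3)] by (simp add: power2_eq_square)
  finally show ?thesis
    by (simp add: dist_norm norm_eq_sqrt_inner)
qed

lemma cone_configuration_crescent_point:
  fixes idx :: "'d::finite \<Rightarrow> nat"
  assumes "bij_betw idx UNIV {1..CARD('d)}" "\<And>m. c m > 0"
  shows "cone_configuration (crescent_point idx c) CARD('d)
    (sqrt (sqsum c CARD('d))) (\<lambda>k. sqrt (crescent_sqdist c k))"
proof
  show "sqrt (sqsum c CARD('d)) > 0"
    using sqsum_pos[of c "CARD('d)"] assms(2) by simp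
  show "sqrt (crescent_sqdist c k) > 0" if "1 \<le> k" for k
    using sqsum_pos[of c k] sqsum_lt_crescent_sqdist[of c k] assms(2) that by simp
  show "norm (crescent_point idx c j) = sqrt (sqsum c CARD('d))" if "j \<le> CARD('d)" for j
    using norm_crescent_point[OF assms(1) that] .
  show "dist (crescent_point idx c j) (crescent_point idx c k) = sqrt (crescent_sqdist c k)"
    if "j < k" "k \<le> CARD('d)" for j k
    using dist_crescent_point[OF assms(1) that] .
qed

lemma general_position_crescent_points:
  fixes idx :: "'d::finite \<Rightarrow> nat"
  assumes bij: "bij_betw idx UNIV {1..CARD('d)}" and pos: "\<And>m. c m > 0"
  shows "general_position (insert 0 (crescent_point idx c ` {..CARD('d)}))"
proof -
  interpret cone_configuration "crescent_point idx c" "CARD('d)"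
    "sqrt (sqsum c CARD('d))" "\<lambda>k. sqrt (crescent_sqdist c k)"
    using cone_configuration_crescent_point[OF assms] .
  let ?Q = "crescent_point idx c" and ?d = "CARD('d)"
  let ?A = "\<lambda>a m. a $ inv_into UNIV idx m"
  have vec_zero: "a = 0" if "\<And>m. 1 \<le> m \<Longrightarrow> m \<le> ?d \<Longrightarrow> ?A a m = 0" for a :: "real ^ 'd"
  proof -
    have "a $ i = 0" for i
    proof -
      have "idx i \<in> {1..?d}"
        using bij by (auto simp: bij_betw_def)
      then show ?thesis
        using that[of "idx i"] bij_betw_imp_inj_on[OF bij] by simp
    qed
    then show ?thesis by (simp add: vec_eq_iff)
  qed
  have off_hyperplane: "a = 0" if "\<And>j. j \<le> ?d \<Longrightarrow> a \<bullet> ?Q j = b" for a b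
  proof (rule vec_zero)
    fix m assume "1 \<le> m" "m \<le> ?d"
    moreover have "\<And>j. j \<le> ?d \<Longrightarrow> (\<Sum>m=1..?d. ?A a m * crescent_coord c j m) = b"
      using that by (simp add: inner_crescent_point[OF bij])
    ultimately show "?A a m = 0"
      using crescent_coord_coeffs_zero_of_const[where c = c and d = ?d and A = "?A a" and b = b]
        pos by blast
  qed
  have off_hyperplane_through_0: "a = 0"
    if "k \<le> ?d" "\<And>j. j \<le> ?d \<Longrightarrow> j \<noteq> k \<Longrightarrow> a \<bullet> ?Q j = 0" for a k
  proof (rule vec_zero)
    fix m assume "1 \<le> m" "m \<le> ?d"
    moreover have "\<And>j. j \<le> ?d \<Longrightarrow> j \<noteq> k \<Longrightarrow> (\<Sum>m=1..?d. ?A a m * crescent_coord c j m) = 0"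
      using that(2) by (simp add: inner_crescent_point[OF bij])
    ultimately show "?A a m = 0"
      using crescent_coord_coeffs_zero_of_vanishing[where c = c and d = ?d and A = "?A a" and k = k]
        pos that(1) by blast
  qed
  show ?thesis
  proof (rule general_positionI)
    fix p and a :: "real ^ 'd" and b
    assume "p \<in> points" and on_hyperplane: "points - {p} \<subseteq> {x. a \<bullet> x = b}"
    then consider "p = 0" | k where "k \<le> ?d" "p = ?Q k" by auto
    then show "a = 0"
    proof cases
      case 1
      then show ?thesis
        using on_hyperplane Q_neq_zero by (intro off_hyperplane) auto
    next
      case 2
      then have "b = 0"
        using on_hyperplane Q_neq_zero by auto
      then show ?thesis
        using on_hyperplane 2 inj_on_Q by (intro off_hyperplane_through_0) (auto simp: inj_on_def)
    qed
  next
    fix z :: "real ^ 'd" and r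
    assume on_sphere: "points \<subseteq> sphere z r"
    then have "norm z = r"
      by auto
    have "z \<bullet> ?Q j = sqsum c ?d / 2" if "j \<le> ?d" for j
    proof -
      have "(norm (z - ?Q j))\<^sup>2 = (norm z)\<^sup>2 - 2 * (z \<bullet> ?Q j) + (norm (?Q j))\<^sup>2"
        by (simp add: power2_norm_eq_inner inner_diff inner_commute algebra_simps)
      moreover have "norm (z - ?Q j) = norm z"
        using on_sphere \<open>norm z = r\<close> that by (auto simp: dist_norm)
      ultimately show ?thesis
        using norm_Q[OF that] sqsum_nonneg[of c ?d] by simp
    qed
    then have "z = 0"
      by (rule off_hyperplane)
    then show "r \<le> 0"
      using \<open>norm z = r\<close> by simp
  qed (use card_points in auto)
qed

lemma sqrt_sqsum_notin_crescent_dists: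
  assumes pos: "\<And>m. c m > 0" and big: "3 * sqsum c (d - 1) < (c d)\<^sup>2"
  shows "sqrt (sqsum c d) \<notin> (\<lambda>k. sqrt (crescent_sqdist c k)) ` {1..d}"
proof
  assume "sqrt (sqsum c d) \<in> (\<lambda>k. sqrt (crescent_sqdist c k)) ` {1..d}"
  then obtain k where k: "1 \<le> k" "k \<le> d" "sqrt (sqsum c d) = sqrt (crescent_sqdist c k)"
    by auto
  show False
  proof (cases "k < d")
    case True
    then show False
      using crescent_sqdist_lt_sqsum[OF pos big k(1)] k(3) by simp
  next
    case False
    then show False
      using sqsum_lt_crescent_sqdist[of c k] pos k by simp
  qed
qed

lemma inj_sqrt_crescent_sqdist:
  assumes "\<And>m. c m > 0" "mono c"
  shows "inj (\<lambda>k. sqrt (crescent_sqdist c k))"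
proof (rule strict_mono_imp_inj_on, rule strict_monoI)
  fix j k :: nat
  assume "j < k"
  then show "sqrt (crescent_sqdist c j) < sqrt (crescent_sqdist c k)"
    using strict_mono_crescent_sqdist[OF assms] by (simp add: strict_mono_less)
qed

theorem theorem1p1:
  fixes n :: nat
  assumes "n \<ge> 3" and "CARD('d::finite) = n - 2"
  shows "\<exists>P :: (real ^ 'd) set. crescent_configuration n P"
proof -
  define d where "d = CARD('d)"
  have n: "n = d + 2" and "1 \<le> d"
    using assms by (auto simp: d_def)
  obtain idx :: "'d \<Rightarrow> nat" where bij: "bij_betw idx UNIV {1..CARD('d)}"
    using finite_same_card_bij[of "UNIV :: 'd set" "{1..CARD('d)}"] by auto
  define c :: "nat \<Rightarrow> real" where "c = (\<lambda>m. 2 ^ m)"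
  have pos: "\<And>m. c m > 0" and "mono c"
    by (auto simp: c_def intro!: monoI power_increasing)
  have big: "3 * sqsum c (d - 1) < (c d)\<^sup>2"
    using sqsum_powers_of_two[of "d - 1"] \<open>1 \<le> d\<close>
    by (simp add: c_def power2_eq_square flip: power_mult_distrib)
  interpret cone_configuration "crescent_point idx c" d
    "sqrt (sqsum c d)" "\<lambda>k. sqrt (crescent_sqdist c k)"
    using cone_configuration_crescent_point[where c = c, OF bij pos] by (simp add: d_def)
  have "crescent_configuration (d + 2) points"
  proof (rule crescent_configuration_points)
    show "inj_on (\<lambda>k. sqrt (crescent_sqdist c k)) {1..d}"
      using inj_sqrt_crescent_sqdist[where c = c, OF pos \<open>mono c\<close>] by (rule inj_on_subset) simp
    show "sqrt (sqsum c d) \<notin> (\<lambda>k. sqrt (crescent_sqdist c k)) ` {1..d}"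
      by (rule sqrt_sqsum_notin_crescent_dists[where c = c, OF pos big])
    show "general_position points"
      using general_position_crescent_points[where c = c, OF bij pos] by (simp add: d_def)
  qed
  then show ?thesis
    using n by blast
qed

end
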